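(* Fix $k\ge1$. Let $\mathcal T_k$ be the set of self-avoiding walks on $\mathbb Z^2$ (including the empty walk) with North, East and South unit steps, starting at $(0,0)$ and confined to the strip $0\le y\le k$. For $w\in\mathcal T_k$ let $h(w)$ (resp. $h_c(w)$) be the number of horizontal steps at height different from $0$ and $k$ (resp. at height $0$ or $k$), let $v(w)$ (resp. $v_c(w)$) be the number of vertical steps ending at height different from $0$ and $k$ (resp. ending at height $0$ or $k$), and let $f(w)$ be the height of the endpoint of $w$. Define $$T_k(s)=\sum_{w\in\mathcal T_k}x^{h(w)}y^{v(w)}a^{h_c(w)}b^{v_c(w)}s^{f(w)}=\sum_{i=0}^kT_{k,i}s^i,$$ where $T_{k,i}$ (a series in $x,y,a,b$) counts walks ending at height $i$, and let $\tilde T_k(s)=T_k(s)-T_{k,0}-s^kT_{k,k}$ (walks not ending at height $0$ or $k$). Then, with $\bar s=1/s$, $$\left(1-\frac x{1-ys}-\frac{xy\bar s}{1-y\bar s}\right)\tilde T_k(s)=\frac{ys-(ys)^k}{1-ys}-\frac{x(ys)^k}{1-ys}\tilde T_k(1/y)-\frac x{1-y\bar s}\tilde T_k(y)+aT_{k,0}\frac{ys-(ys)^k}{1-ys}+aT_{k,k}\frac{ys^{k-1}-y^k}{1-y\bar s},$$ $$T_{k,0}=1+bx\,y^{-1}\tilde T_k(y)+aT_{k,0}+ab\,y^{k-1}T_{k,k},$$ $$T_{k,k}=by^{k-1}+bxy^{k-1}\tilde T_k(1/y)+ab\,y^{k-1}T_{k,0}+aT_{k,k}.$$ *)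

theory Defs
  imports "HOL-Analysis.Analysis"
begin

datatype step = N | E | S

fun move :: "step \<Rightarrow> int \<times> int \<Rightarrow> int \<times> int" where
  "move N (p, q) = (p, q + 1)"
| "move E (p, q) = (p + 1, q)"
| "move S (p, q) = (p, q - 1)"

fun pts :: "int \<times> int \<Rightarrow> step list \<Rightarrow> (int \<times> int) list" where
  "pts p [] = [p]"
| "pts p (st # w) = p # pts (move st p) w"

definition walks :: "nat \<Rightarrow> step list set" where
  "walks k = {w. distinct (pts (0, 0) w) \<and>
                 (\<forall>p \<in> set (pts (0, 0) w). 0 \<le> snd p \<and> snd p \<le> int k)}"

definition steps_at :: "step list \<Rightarrow> (step \<times> (int \<times> int)) list" where
  "steps_at w = zip w (pts (0, 0) w)"

definition boundary :: "nat \<Rightarrow> int \<Rightarrow> bool" where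
  "boundary k q \<longleftrightarrow> q = 0 \<or> q = int k"

definition hstat :: "nat \<Rightarrow> step list \<Rightarrow> nat" where
  "hstat k w = length (filter (\<lambda>(st, p). st = E \<and> \<not> boundary k (snd p)) (steps_at w))"

definition hcstat :: "nat \<Rightarrow> step list \<Rightarrow> nat" where
  "hcstat k w = length (filter (\<lambda>(st, p). st = E \<and> boundary k (snd p)) (steps_at w))"

definition vstat :: "nat \<Rightarrow> step list \<Rightarrow> nat" where
  "vstat k w = length (filter (\<lambda>(st, p). st \<noteq> E \<and> \<not> boundary k (snd (move st p))) (steps_at w))"

definition vcstat :: "nat \<Rightarrow> step list \<Rightarrow> nat" where
  "vcstat k w = length (filter (\<lambda>(st, p). st \<noteq> E \<and> boundary k (snd (move st p))) (steps_at w))"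

definition endh :: "step list \<Rightarrow> int" where
  "endh w = snd (last (pts (0, 0) w))"

definition weight :: "nat \<Rightarrow> complex \<Rightarrow> complex \<Rightarrow> complex \<Rightarrow> complex \<Rightarrow> step list \<Rightarrow> complex" where
  "weight k x y a b w = x ^ hstat k w * y ^ vstat k w * a ^ hcstat k w * b ^ vcstat k w"

definition Tcoef :: "nat \<Rightarrow> complex \<Rightarrow> complex \<Rightarrow> complex \<Rightarrow> complex \<Rightarrow> nat \<Rightarrow> complex" where
  "Tcoef k x y a b i = infsum (weight k x y a b) {w \<in> walks k. endh w = int i}"

definition Ttilde :: "nat \<Rightarrow> complex \<Rightarrow> complex \<Rightarrow> complex \<Rightarrow> complex \<Rightarrow> complex \<Rightarrow> complex" where
  "Ttilde k x y a b s = (\<Sum>i\<in>{1..<k}. Tcoef k x y a b i * s ^ i)"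

end

theory Submission
  imports Defs
begin

text \<open>
  A self-avoiding walk without east steps cannot turn back, so it is a vertical run. Hence a walk
  of \<open>\<T>\<^sub>k\<close> is either a run from the origin or, cut at its last east step, uniquely \<open>u E r\<close> with
  \<open>u \<in> \<T>\<^sub>k\<close> and \<open>r\<close> a run starting at the height of the end of \<open>u\<close>; conversely every such word is in
  \<open>\<T>\<^sub>k\<close>, because \<open>r\<close> lies strictly east of \<open>u\<close>. The weight factorises along this decomposition, so
  \<open>T\<^sub>k\<^sub>,\<^sub>i\<close> is the weight of the run \<open>0 \<rightarrow> i\<close> plus \<open>\<Sum>\<^sub>j T\<^sub>k\<^sub>,\<^sub>j\<close> times the weight of an east step at
  height \<open>j\<close> times that of the run \<open>j \<rightarrow> i\<close>. For \<open>i = 0\<close> and \<open>i = k\<close> this gives the last two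
  equations. Multiplying by \<open>s\<^sup>i\<close> and summing over \<open>0 < i < k\<close> turns the run weights into geometric
  sums in \<open>y s\<close> and \<open>y / s\<close>, whose closed forms give the kernel equation.
\<close>

lemma append_Cons_eq_imp_eq_prefix:
  "x \<notin> set r \<Longrightarrow> x \<notin> set r' \<Longrightarrow> u @ x # r = u' @ x # r' \<Longrightarrow> u = u'"
  by (smt (verit, best) append_Cons_eq_iff append_assoc append_eq_append_conv2 append_same_eq)

lemma infsum_UN_disjoint_finite:
  fixes f :: "'a \<Rightarrow> 'b::banach"
  assumes "finite J" "f summable_on A" "\<And>j. j \<in> J \<Longrightarrow> B j \<subseteq> A" "disjoint_family_on B J"
  shows "infsum f (\<Union>j\<in>J. B j) = (\<Sum>j\<in>J. infsum f (B j))"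
  using assms
proof (induction J rule: finite_induct)
  case (insert j J)
  have "B j \<inter> (\<Union>i\<in>J. B i) = {}"
    using insert.prems(3) insert.hyps(2) unfolding disjoint_family_on_def by fastforce
  moreover have "f summable_on B j" "f summable_on (\<Union>i\<in>J. B i)"
    using insert.prems summable_on_subset_banach by (metis UN_subset_iff insertCI)+
  ultimately have "infsum f (\<Union>i\<in>insert j J. B i) = infsum f (B j) + infsum f (\<Union>i\<in>J. B i)"
    by (simp add: infsum_Un_disjoint)
  moreover have "disjoint_family_on B J"
    using insert.prems(3) by (meson disjoint_family_on_mono subset_insertI)
  ultimately show ?case using insert by simp
qed simp

lemma sum_atLeastAtMost_split_ends:
  fixes g :: "nat \<Rightarrow> 'a::comm_monoid_add"
  shows "1 \<le> k \<Longrightarrow> (\<Sum>j\<in>{0..k}. g j) = g 0 + g k + (\<Sum>j\<in>{1..<k}. g j)"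
proof -
  assume "1 \<le> k"
  then obtain m where k: "k = Suc m" by (cases k) auto
  have "(\<Sum>j\<in>{0..k}. g j) = g 0 + (\<Sum>j\<in>{1..m}. g j) + g k"
    unfolding k by (simp add: sum.atLeast0_atMost_Suc sum.atLeast_Suc_atMost)
  then show ?thesis unfolding k by (simp add: atLeastLessThanSuc_atLeastAtMost ac_simps)
qed

lemma sum_gp_two_var_multiplied:
  fixes y s :: "'a::comm_ring_1"
  shows "j \<le> m \<Longrightarrow> (1 - y * s) * (\<Sum>i\<in>{j..<m}. y ^ (i - j) * s ^ i) = s ^ j - y ^ (m - j) * s ^ m"
proof (induction m)
  case (Suc m)
  show ?case
  proof (cases "j = Suc m")
    case False
    then have "j \<le> m" using Suc.prems by simp
    have "(1 - y * s) * (\<Sum>i\<in>{j..<Suc m}. y ^ (i - j) * s ^ i)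
        = (1 - y * s) * (\<Sum>i\<in>{j..<m}. y ^ (i - j) * s ^ i) + (1 - y * s) * (y ^ (m - j) * s ^ m)"
      using \<open>j \<le> m\<close> by (simp add: distrib_left)
    also have "\<dots> = s ^ j - y ^ (Suc m - j) * s ^ Suc m"
      using Suc.IH \<open>j \<le> m\<close> by (simp add: Suc_diff_le algebra_simps)
    finally show ?thesis .
  qed simp
qed simp

lemma sum_gp_two_var_rev_multiplied:
  fixes y s :: "'a::comm_ring_1"
  shows "j \<le> m \<Longrightarrow> (s - y) * (\<Sum>i\<in>{j..<m}. y ^ (m - i) * s ^ i) = y * s ^ m - y ^ (m - j + 1) * s ^ j"
proof (induction m)
  case (Suc m)
  show ?case
  proof (cases "j = Suc m")
    case False
    then have "j \<le> m" using Suc.prems by simp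
    have "(\<Sum>i\<in>{j..<Suc m}. y ^ (Suc m - i) * s ^ i) = y * (\<Sum>i\<in>{j..<m}. y ^ (m - i) * s ^ i) + y * s ^ m"
      using \<open>j \<le> m\<close> by (simp add: sum_distrib_left Suc_diff_le mult.assoc)
    then have "(s - y) * (\<Sum>i\<in>{j..<Suc m}. y ^ (Suc m - i) * s ^ i)
        = y * ((s - y) * (\<Sum>i\<in>{j..<m}. y ^ (m - i) * s ^ i)) + (s - y) * (y * s ^ m)"
      by (simp add: algebra_simps)
    also have "\<dots> = y * (y * s ^ m - y ^ (m - j + 1) * s ^ j) + (s - y) * (y * s ^ m)"
      using Suc.IH \<open>j \<le> m\<close> by simp
    also have "\<dots> = y * s ^ Suc m - y ^ (Suc m - j + 1) * s ^ j"
      using \<open>j \<le> m\<close> by (simp add: Suc_diff_le algebra_simps)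
    finally show ?thesis .
  qed simp
qed simp

lemma linear_equation_collect:
  fixes A P R B1 B2 T0 Tk Z a x y s D1 D2 :: "'a::field"
  assumes "A = (1 + a * T0) * (P / D1) + a * Tk * (R / D2)
               + x * ((A - Z * B1) / D1 + (y * (1 / s) * A - B2) / D2)"
  shows "(1 - x / D1 - x * y * (1 / s) / D2) * A
           = P / D1 - x * Z / D1 * B1 - x / D2 * B2 + a * T0 * P / D1 + a * Tk * R / D2"
  using assms by (simp add: algebra_simps add_divide_distrib diff_divide_distrib)

definition endp :: "int \<times> int \<Rightarrow> step list \<Rightarrow> int \<times> int" where
  "endp p w = last (pts p w)"

lemma pts_not_Nil [simp]: "pts p w \<noteq> []"
  by (cases w) auto

lemma endp_Nil [simp]: "endp p [] = p"
  by (simp add: endp_def)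

lemma endp_Cons [simp]: "endp p (st # w) = endp (move st p) w"
  by (simp add: endp_def)

lemma endp_append: "endp p (u @ v) = endp (endp p u) v"
  by (induction u arbitrary: p) auto

lemma endp_in_pts: "endp p w \<in> set (pts p w)"
  by (simp add: endp_def)

lemma pts_append_Cons: "pts p (u @ st # v) = pts p u @ pts (move st (endp p u)) v"
  by (induction u arbitrary: p) auto

lemma snd_move_E [simp]: "snd (move E p) = snd p"
  by (cases p) simp

lemma fst_pts_le_endp: "z \<in> set (pts p w) \<Longrightarrow> fst z \<le> fst (endp p w)"
proof (induction w arbitrary: p z)
  case (Cons st w)
  have "move st p \<in> set (pts (move st p) w)" by (cases w) auto
  then have "fst (move st p) \<le> fst (endp (move st p) w)" by (rule Cons.IH)
  moreover have "fst p \<le> fst (move st p)" by (cases st; cases p) auto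
  ultimately show ?case using Cons.prems Cons.IH[of z "move st p"] by auto
qed simp

definition run :: "int \<Rightarrow> int \<Rightarrow> step list" where
  "run j i = (if j \<le> i then replicate (nat (i - j)) N else replicate (nat (j - i)) S)"

lemma pts_replicate_N: "pts (q, j) (replicate n N) = map (\<lambda>m. (q, j + int m)) [0..<Suc n]"
proof (induction n arbitrary: j)
  case (Suc n)
  show ?case using Suc[of "j + 1"]
    by (simp only: replicate_Suc pts.simps move.simps map_upt_Suc) (simp add: algebra_simps)
qed simp

lemma pts_replicate_S: "pts (q, j) (replicate n S) = map (\<lambda>m. (q, j - int m)) [0..<Suc n]"
proof (induction n arbitrary: j)
  case (Suc n)
  show ?case using Suc[of "j - 1"]
    by (simp only: replicate_Suc pts.simps move.simps map_upt_Suc) (simp add: algebra_simps)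
qed simp

lemma E_notin_run [simp]: "E \<notin> set (run j i)"
  by (simp add: run_def)

lemma endp_run [simp]: "endp (q, j) (run j i) = (q, i)"
  by (simp add: run_def endp_def pts_replicate_N pts_replicate_S)

lemma distinct_pts_run: "distinct (pts (q, j) (run j i))"
  by (auto simp: run_def pts_replicate_N pts_replicate_S distinct_map inj_on_def)

lemma set_pts_run: "set (pts (q, j) (run j i)) \<subseteq> {q} \<times> {min i j..max i j}"
  by (auto simp: run_def pts_replicate_N pts_replicate_S)

lemma vertical_self_avoiding_uniform:
  "E \<notin> set w \<Longrightarrow> distinct (pts p w) \<Longrightarrow> w = replicate (length w) N \<or> w = replicate (length w) S"
proof (induction w arbitrary: p)
  case (Cons st w)
  have IH: "w = replicate (length w) N \<or> w = replicate (length w) S"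
    using Cons.prems Cons.IH[of "move st p"] by auto
  show ?case
  proof (cases w)
    case Nil
    then show ?thesis using Cons.prems by (cases st) auto
  next
    case (Cons st' w')
    have "st' = st"
    proof (rule ccontr)
      assume "st' \<noteq> st"
      \<comment> \<open>two consecutive opposite vertical steps would revisit \<open>p\<close>\<close>
      then have "move st' (move st p) = p"
        using Cons.prems \<open>w = st' # w'\<close> by (cases st; cases st'; cases p) auto
      then show False using Cons.prems \<open>w = st' # w'\<close> by (cases w') auto
    qed
    then show ?thesis using IH Cons by (cases st) auto
  qed
qed simp

lemma vertical_self_avoiding_eq_run:
  assumes "E \<notin> set w" "distinct (pts p w)"
  shows "w = run (snd p) (snd (endp p w))"
proof -
  obtain q j where p: "p = (q, j)" by fastforce
  have endp_N: "endp (q, j) (replicate n N) = (q, j + int n)" for n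
    by (simp add: endp_def pts_replicate_N)
  have endp_S: "endp (q, j) (replicate n S) = (q, j - int n)" for n
    by (simp add: endp_def pts_replicate_S)
  from vertical_self_avoiding_uniform[OF assms] show ?thesis
  proof
    assume "w = replicate (length w) N"
    then obtain n where "w = replicate n N" by blast
    then show ?thesis by (simp add: p endp_N run_def)
  next
    assume "w = replicate (length w) S"
    then obtain n where "w = replicate n S" by blast
    then show ?thesis by (simp add: p endp_S run_def)
  qed
qed

lemma endh_eq_snd_endp: "endh w = snd (endp (0, 0) w)"
  by (simp add: endh_def endp_def)

lemma walks_endh_bounds: "w \<in> walks k \<Longrightarrow> 0 \<le> endh w \<and> endh w \<le> int k"
  using endp_in_pts[of "(0, 0)" w] by (auto simp: walks_def endh_eq_snd_endp)

lemma run_from_origin_in_walks: "i \<le> k \<Longrightarrow> run 0 (int i) \<in> walks k"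
  using distinct_pts_run[of 0 0 "int i"] set_pts_run[of 0 0 "int i"] by (auto simp: walks_def)

lemma endh_run_from_origin [simp]: "endh (run 0 i) = i"
  by (simp add: endh_eq_snd_endp)

lemma endh_append_E_run [simp]: "endh (u @ E # run (endh u) i) = i"
proof (cases "endp (0, 0) u")
  case (Pair q j)
  then show ?thesis by (simp add: endh_eq_snd_endp endp_append)
qed

lemma append_E_run_in_walks:
  assumes u: "u \<in> walks k" and i: "0 \<le> i" "i \<le> int k"
  shows "u @ E # run (endh u) i \<in> walks k"
proof -
  obtain q j where e: "endp (0, 0) u = (q, j)" by fastforce
  have j: "endh u = j" using e by (simp add: endh_eq_snd_endp)
  let ?R = "pts (q + 1, j) (run j i)"
  have pts: "pts (0, 0) (u @ E # run j i) = pts (0, 0) u @ ?R"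
    by (simp add: pts_append_Cons e)
  have R: "set ?R \<subseteq> {q + 1} \<times> {min i j..max i j}"
    by (rule set_pts_run)
  have "set (pts (0, 0) u) \<inter> set ?R = {}"
    using R fst_pts_le_endp[of _ "(0, 0)" u] e by fastforce
  moreover have "\<forall>p \<in> set ?R. 0 \<le> snd p \<and> snd p \<le> int k"
  proof
    fix p assume "p \<in> set ?R"
    then have "snd p \<in> {min i j..max i j}" using R by auto
    then show "0 \<le> snd p \<and> snd p \<le> int k" using i walks_endh_bounds[OF u] j by auto
  qed
  ultimately show ?thesis
    using u distinct_pts_run[of "q + 1" j i] by (auto simp: walks_def pts j)
qed

lemma walks_decomposition:
  assumes w: "w \<in> walks k"
  shows "w = run 0 (endh w) \<or> (\<exists>u \<in> walks k. w = u @ E # run (endh u) (endh w))"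
proof (cases "E \<in> set w")
  case False
  then show ?thesis
    using vertical_self_avoiding_eq_run[of w "(0, 0)"] w by (simp add: walks_def endh_eq_snd_endp)
next
  case True
  then obtain u r where wr: "w = u @ E # r" and r: "E \<notin> set r"
    using split_list_last by metis
  let ?p = "move E (endp (0, 0) u)"
  have pts: "pts (0, 0) w = pts (0, 0) u @ pts ?p r"
    by (simp add: wr pts_append_Cons)
  have "u \<in> walks k" using w by (auto simp: walks_def pts)
  moreover have "distinct (pts ?p r)" using w by (simp add: walks_def pts)
  then have "r = run (snd ?p) (snd (endp ?p r))"
    by (rule vertical_self_avoiding_eq_run[OF r])
  then have "r = run (endh u) (endh w)"
    by (simp add: wr endh_eq_snd_endp endp_append)
  ultimately show ?thesis using wr by blast
qed

context
  fixes k :: nat and x y a b :: "'w :: comm_monoid_mult"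
begin

definition step_weight :: "step \<Rightarrow> int \<times> int \<Rightarrow> 'w" where
  "step_weight st p =
     (if st = E then (if boundary k (snd p) then a else x)
      else (if boundary k (snd (move st p)) then b else y))"

fun path_weight :: "int \<times> int \<Rightarrow> step list \<Rightarrow> 'w" where
  "path_weight p [] = 1"
| "path_weight p (st # w) = step_weight st p * path_weight (move st p) w"

lemma path_weight_append: "path_weight p (u @ v) = path_weight p u * path_weight (endp p u) v"
  by (induction u arbitrary: p) (auto simp: mult.assoc)

text \<open>Only the last step of a run can end on the boundary.\<close>
definition run_weight :: "int \<Rightarrow> int \<Rightarrow> 'w" where
  "run_weight j i =
     (if i = j then 1 else y ^ (nat \<bar>i - j\<bar> - 1) * (if boundary k i then b else y))"

lemma path_weight_replicate_N:
  "0 \<le> j \<Longrightarrow> j + int n \<le> int k \<Longrightarrow>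
   path_weight (q, j) (replicate n N) = (if n = 0 then 1 else y ^ (n - 1) * (if boundary k (j + int n) then b else y))"
proof (induction n arbitrary: j)
  case (Suc n)
  then show ?case using Suc.IH[of "j + 1"]
    by (cases n) (simp_all add: step_weight_def boundary_def algebra_simps)
qed simp

lemma path_weight_replicate_S:
  "int n \<le> j \<Longrightarrow> j \<le> int k \<Longrightarrow>
   path_weight (q, j) (replicate n S) = (if n = 0 then 1 else y ^ (n - 1) * (if boundary k (j - int n) then b else y))"
proof (induction n arbitrary: j)
  case (Suc n)
  then show ?case using Suc.IH[of "j - 1"]
    by (cases n) (simp_all add: step_weight_def boundary_def algebra_simps)
qed simp

lemma path_weight_run:
  "0 \<le> i \<Longrightarrow> i \<le> int k \<Longrightarrow> 0 \<le> j \<Longrightarrow> j \<le> int k \<Longrightarrow> path_weight (q, j) (run j i) = run_weight j i"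
  using path_weight_replicate_N[of j "nat (i - j)" q] path_weight_replicate_S[of "nat (j - i)" j q]
  by (auto simp: run_def run_weight_def)

end

lemma weight_eq_path_weight: "weight k x y a b w = path_weight k x y a b (0, 0) w"
proof -
  let ?cnt = "\<lambda>P p w. length (filter P (zip w (pts p w)))"
  have "x ^ ?cnt (\<lambda>(st, p). st = E \<and> \<not> boundary k (snd p)) p w
      * y ^ ?cnt (\<lambda>(st, p). st \<noteq> E \<and> \<not> boundary k (snd (move st p))) p w
      * a ^ ?cnt (\<lambda>(st, p). st = E \<and> boundary k (snd p)) p w
      * b ^ ?cnt (\<lambda>(st, p). st \<noteq> E \<and> boundary k (snd (move st p))) p w
      = path_weight k x y a b p w" for p
    by (induction w arbitrary: p) (auto simp: step_weight_def power_add ac_simps)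
  then show ?thesis
    by (simp add: weight_def hstat_def vstat_def hcstat_def vcstat_def steps_at_def)
qed

definition walks_ending_at :: "nat \<Rightarrow> int \<Rightarrow> step list set" where
  "walks_ending_at k i = {w \<in> walks k. endh w = i}"

lemma walks_ending_at_eq:
  assumes "i \<le> k"
  shows "walks_ending_at k (int i) = insert (run 0 (int i))
           (\<Union>j\<in>{0..k}. (\<lambda>u. u @ E # run (int j) (int i)) ` walks_ending_at k (int j))"
    (is "_ = insert _ (\<Union>j\<in>_. ?G j)")
proof (intro equalityI subsetI)
  fix w assume "w \<in> walks_ending_at k (int i)"
  then have w: "w \<in> walks k" "endh w = int i" by (auto simp: walks_ending_at_def)
  from walks_decomposition[OF w(1)] show "w \<in> insert (run 0 (int i)) (\<Union>j\<in>{0..k}. ?G j)"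
  proof
    assume "\<exists>u \<in> walks k. w = u @ E # run (endh u) (endh w)"
    then obtain u where u: "u \<in> walks k" "w = u @ E # run (endh u) (endh w)" by blast
    define j where "j = nat (endh u)"
    have "endh u = int j" "j \<in> {0..k}" using walks_endh_bounds[OF u(1)] by (auto simp: j_def)
    then have "w \<in> ?G j" using u w(2) by (auto simp: walks_ending_at_def)
    then show ?thesis using \<open>j \<in> {0..k}\<close> by blast
  qed (use w in simp)
next
  fix w assume "w \<in> insert (run 0 (int i)) (\<Union>j\<in>{0..k}. ?G j)"
  then consider "w = run 0 (int i)"
    | j u where "u \<in> walks_ending_at k (int j)" "w = u @ E # run (int j) (int i)"
    by blast
  then show "w \<in> walks_ending_at k (int i)"
  proof cases
    case 1
    then show ?thesis using run_from_origin_in_walks[OF assms] by (simp add: walks_ending_at_def)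
  next
    case 2
    then have "u \<in> walks k" "endh u = int j" by (auto simp: walks_ending_at_def)
    then show ?thesis
      using append_E_run_in_walks[of u k "int i"] endh_append_E_run[of u "int i"] 2(2) assms
      by (simp add: walks_ending_at_def)
  qed
qed

lemma weight_append_E_run:
  assumes "u \<in> walks k" "endh u = int j" "i \<le> k"
  shows "weight k x y a b (u @ E # run (int j) (int i))
           = weight k x y a b u * ((if boundary k (int j) then a else x) * run_weight k y b (int j) (int i))"
proof -
  obtain q where e: "endp (0, 0) u = (q, int j)"
    using assms(2) by (metis endh_eq_snd_endp prod.collapse)
  have "j \<le> k" using walks_endh_bounds[OF assms(1)] assms(2) by simp
  then have "path_weight k x y a b (q + 1, int j) (run (int j) (int i)) = run_weight k y b (int j) (int i)"
    using assms(3) by (intro path_weight_run) auto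
  then show ?thesis
    by (simp add: weight_eq_path_weight path_weight_append e step_weight_def)
qed

lemma Tcoef_recursion:
  assumes summable: "weight k x y a b summable_on walks k" and "i \<le> k"
  shows "Tcoef k x y a b i = run_weight k y b 0 (int i)
     + (\<Sum>j\<in>{0..k}. Tcoef k x y a b j * ((if boundary k (int j) then a else x) * run_weight k y b (int j) (int i)))"
proof -
  let ?f = "weight k x y a b"
  let ?G = "\<lambda>j. (\<lambda>u. u @ E # run (int j) (int i)) ` walks_ending_at k (int j)"
  have Tcoef: "Tcoef k x y a b j = infsum ?f (walks_ending_at k (int j))" for j
    by (simp add: Tcoef_def walks_ending_at_def)
  have G_walks: "(\<Union>j\<in>{0..k}. ?G j) \<subseteq> walks k"
  proof -
    have "(\<Union>j\<in>{0..k}. ?G j) \<subseteq> walks_ending_at k (int i)"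
      using walks_ending_at_eq[OF \<open>i \<le> k\<close>] by blast
    then show ?thesis by (auto simp: walks_ending_at_def)
  qed
  have run_notin: "run 0 (int i) \<notin> (\<Union>j\<in>{0..k}. ?G j)"
  proof
    assume "run 0 (int i) \<in> (\<Union>j\<in>{0..k}. ?G j)"
    then obtain j u where "run 0 (int i) = u @ E # run (int j) (int i)" by blast
    then have "E \<in> set (run 0 (int i))" by (metis in_set_conv_decomp)
    then show False by simp
  qed
  have disjoint: "disjoint_family_on ?G {0..k}"
    using append_Cons_eq_imp_eq_prefix[OF E_notin_run E_notin_run]
    by (fastforce simp: disjoint_family_on_def walks_ending_at_def)
  have G_sum: "infsum ?f (?G j) = Tcoef k x y a b j * ((if boundary k (int j) then a else x) * run_weight k y b (int j) (int i))"
    if "j \<in> {0..k}" for j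
  proof -
    have "infsum ?f (?G j) = infsum (?f \<circ> (\<lambda>u. u @ E # run (int j) (int i))) (walks_ending_at k (int j))"
      by (rule infsum_reindex) (auto simp: inj_on_def)
    also have "\<dots> = infsum (\<lambda>u. ?f u * ((if boundary k (int j) then a else x)
                                      * run_weight k y b (int j) (int i))) (walks_ending_at k (int j))"
      using weight_append_E_run[OF _ _ \<open>i \<le> k\<close>] by (intro infsum_cong) (auto simp: walks_ending_at_def)
    finally show ?thesis by (simp add: Tcoef infsum_cmult_left')
  qed
  have "Tcoef k x y a b i = ?f (run 0 (int i)) + infsum ?f (\<Union>j\<in>{0..k}. ?G j)"
    unfolding Tcoef walks_ending_at_eq[OF \<open>i \<le> k\<close>]
    by (intro infsum_insert run_notin summable_on_subset_banach[OF summable G_walks])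
  also have "infsum ?f (\<Union>j\<in>{0..k}. ?G j) = (\<Sum>j\<in>{0..k}. infsum ?f (?G j))"
    using G_walks by (intro infsum_UN_disjoint_finite[OF _ summable _ disjoint]) (simp, blast)
  finally show ?thesis
    using assms(2) by (simp add: G_sum weight_eq_path_weight path_weight_run)
qed

definition run_gf :: "nat \<Rightarrow> 'a \<Rightarrow> 'a \<Rightarrow> nat \<Rightarrow> 'a \<Rightarrow> 'a::comm_semiring_1" where
  "run_gf k y b j s = (\<Sum>i\<in>{1..<k}. run_weight k y b (int j) (int i) * s ^ i)"

lemma run_gf_bottom:
  fixes y s :: "'a::comm_ring_1"
  assumes "1 \<le> k"
  shows "(1 - y * s) * run_gf k y b 0 s = y * s - (y * s) ^ k"
proof -
  have "run_gf k y b 0 s = (\<Sum>i\<in>{1..<k}. 1 ^ (i - 1) * (y * s) ^ i)"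
    unfolding run_gf_def by (intro sum.cong) (auto simp: run_weight_def boundary_def power_mult_distrib power_Suc2[symmetric])
  then show ?thesis using sum_gp_two_var_multiplied[OF assms, of 1 "y * s"] by simp
qed

lemma run_gf_top:
  fixes y s :: "'a::field"
  assumes "1 \<le> k" "s \<noteq> 0"
  shows "(1 - y * (1 / s)) * run_gf k y b k s = y * s ^ (k - 1) - y ^ k"
proof -
  have "run_gf k y b k s = (\<Sum>i\<in>{1..<k}. y ^ (k - i) * s ^ i)"
    unfolding run_gf_def
    by (intro sum.cong) (auto simp: run_weight_def boundary_def nat_diff_distrib power_Suc2[symmetric] Suc_diff_Suc)
  then have "(s - y) * run_gf k y b k s = y * s ^ k - y ^ k * s"
    using sum_gp_two_var_rev_multiplied[OF assms(1), of s y] assms(1) by simp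
  moreover have "s ^ k = s * s ^ (k - 1)" using assms(1) by (simp add: power_eq_if)
  ultimately show ?thesis using assms(2) by (simp add: field_simps)
qed

lemma run_gf_interior:
  fixes y s :: "'a::field"
  assumes "0 < j" "j < k" "y \<noteq> 0" "s \<noteq> 0" "1 - y * s \<noteq> 0" "1 - y * (1 / s) \<noteq> 0"
  shows "run_gf k y b j s = (s ^ j - (y * s) ^ k * (1 / y) ^ j) / (1 - y * s)
                           + (y * (1 / s) * s ^ j - y ^ j) / (1 - y * (1 / s))"
proof -
  let ?down = "\<Sum>i\<in>{1..<j}. y ^ (j - i) * s ^ i" and ?up = "\<Sum>i\<in>{j..<k}. y ^ (i - j) * s ^ i"
  have "run_gf k y b j s = ?down + ?up"
  proof -
    have "run_gf k y b j s = (\<Sum>i\<in>{1..<j}. run_weight k y b (int j) (int i) * s ^ i)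
                           + (\<Sum>i\<in>{j..<k}. run_weight k y b (int j) (int i) * s ^ i)"
      unfolding run_gf_def using assms(1,2) by (simp add: sum.atLeastLessThan_concat)
    also have "\<dots> = ?down + ?up"
      using assms(1,2)
      by (intro arg_cong2[where f = "(+)"] sum.cong)
         (auto simp: run_weight_def boundary_def nat_diff_distrib power_Suc2[symmetric] Suc_diff_Suc)
    finally show ?thesis .
  qed
  moreover have "?down = (y * (1 / s) * s ^ j - y ^ j) / (1 - y * (1 / s))"
  proof -
    have "s - y \<noteq> 0" using assms(4,6) by (simp add: field_simps)
    have "(s - y) * ?down = y * s ^ j - y ^ j * s"
      using sum_gp_two_var_rev_multiplied[of 1 j s y] assms(1) by simp
    then have "?down = (y * s ^ j - y ^ j * s) / (s - y)"
      using \<open>s - y \<noteq> 0\<close> by (simp add: eq_divide_eq ac_simps)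
    also have "\<dots> = (y * (1 / s) * s ^ j - y ^ j) / (1 - y * (1 / s))"
      using assms(4) \<open>s - y \<noteq> 0\<close> by (simp add: field_simps)
    finally show ?thesis .
  qed
  moreover have "?up = (s ^ j - (y * s) ^ k * (1 / y) ^ j) / (1 - y * s)"
  proof -
    have "(1 - y * s) * ?up = s ^ j - y ^ (k - j) * s ^ k"
      using sum_gp_two_var_multiplied[of j k y s] assms(2) by simp
    moreover have "y ^ (k - j) * s ^ k = (y * s) ^ k * (1 / y) ^ j"
      using assms(2,3) by (simp add: power_diff power_one_over power_mult_distrib)
    ultimately show ?thesis using assms(5) by (simp add: field_simps)
  qed
  ultimately show ?thesis by simp
qed

lemma sum_Tcoef_run_gf_interior:
  assumes "y \<noteq> 0" "s \<noteq> 0" "1 - y * s \<noteq> 0" "1 - y * (1 / s) \<noteq> 0"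
  shows "(\<Sum>j\<in>{1..<k}. Tcoef k x y a b j * run_gf k y b j s)
           = (Ttilde k x y a b s - (y * s) ^ k * Ttilde k x y a b (1 / y)) / (1 - y * s)
             + (y * (1 / s) * Ttilde k x y a b s - Ttilde k x y a b y) / (1 - y * (1 / s))"
proof -
  let ?T = "Tcoef k x y a b"
  have "(\<Sum>j\<in>{1..<k}. ?T j * run_gf k y b j s)
      = (\<Sum>j\<in>{1..<k}. (?T j * s ^ j - (y * s) ^ k * (?T j * (1 / y) ^ j)) / (1 - y * s)
                        + (y * (1 / s) * (?T j * s ^ j) - ?T j * y ^ j) / (1 - y * (1 / s)))"
    using assms by (intro sum.cong refl) (simp add: run_gf_interior field_simps)
  then show ?thesis
    by (simp only: Ttilde_def sum.distrib sum_subtractf diff_divide_distrib sum_divide_distrib sum_distrib_left)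
qed

lemma Ttilde_eq_run_gf:
  assumes "1 \<le> k" "weight k x y a b summable_on walks k"
  shows "Ttilde k x y a b s = (1 + a * Tcoef k x y a b 0) * run_gf k y b 0 s
           + a * Tcoef k x y a b k * run_gf k y b k s
           + x * (\<Sum>j\<in>{1..<k}. Tcoef k x y a b j * run_gf k y b j s)"
proof -
  let ?T = "Tcoef k x y a b"
  let ?h = "\<lambda>j. if boundary k (int j) then a else x"
  have "Ttilde k x y a b s
      = (\<Sum>i\<in>{1..<k}. (run_weight k y b 0 (int i)
                          + (\<Sum>j\<in>{0..k}. ?T j * (?h j * run_weight k y b (int j) (int i)))) * s ^ i)"
    unfolding Ttilde_def using Tcoef_recursion[OF assms(2)] by (intro sum.cong refl) simp
  also have "\<dots> = run_gf k y b 0 s + (\<Sum>j\<in>{0..k}. ?T j * ?h j * run_gf k y b j s)"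
    unfolding run_gf_def
    by (simp add: distrib_right sum.distrib sum_distrib_left sum_distrib_right mult.assoc)
       (rule sum.swap)
  also have "\<dots> = (1 + a * ?T 0) * run_gf k y b 0 s + a * ?T k * run_gf k y b k s
                  + x * (\<Sum>j\<in>{1..<k}. ?T j * run_gf k y b j s)"
    using assms(1) by (simp add: sum_atLeastAtMost_split_ends boundary_def sum_distrib_left algebra_simps)
  finally show ?thesis .
qed

lemma Tcoef_bottom_eq:
  assumes "1 \<le> k" "weight k x y a b summable_on walks k" "y \<noteq> 0"
  shows "Tcoef k x y a b 0 = 1 + b * x * (1 / y) * Ttilde k x y a b y + a * Tcoef k x y a b 0
           + a * b * y ^ (k - 1) * Tcoef k x y a b k"
proof -
  let ?T = "Tcoef k x y a b"
  have "(\<Sum>j\<in>{1..<k}. ?T j * (x * run_weight k y b (int j) 0)) = b * x * (1 / y) * Ttilde k x y a b y"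
  proof -
    have "?T j * (x * run_weight k y b (int j) 0) = b * x * (1 / y) * (?T j * y ^ j)" if "j \<in> {1..<k}" for j
      using that assms(3) by (simp add: run_weight_def boundary_def power_eq_if)
    then have "(\<Sum>j\<in>{1..<k}. ?T j * (x * run_weight k y b (int j) 0))
             = (\<Sum>j\<in>{1..<k}. b * x * (1 / y) * (?T j * y ^ j))"
      by (rule sum.cong[OF refl])
    then show ?thesis by (simp only: Ttilde_def sum_distrib_left)
  qed
  then show ?thesis
    using Tcoef_recursion[OF assms(2), of 0] assms(1)
    by (simp add: sum_atLeastAtMost_split_ends boundary_def run_weight_def algebra_simps)
qed

lemma Tcoef_top_eq:
  assumes "1 \<le> k" "weight k x y a b summable_on walks k" "y \<noteq> 0"
  shows "Tcoef k x y a b k = b * y ^ (k - 1) + b * x * y ^ (k - 1) * Ttilde k x y a b (1 / y)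
           + a * b * y ^ (k - 1) * Tcoef k x y a b 0 + a * Tcoef k x y a b k"
proof -
  let ?T = "Tcoef k x y a b"
  have "(\<Sum>j\<in>{1..<k}. ?T j * (x * run_weight k y b (int j) (int k)))
          = b * x * y ^ (k - 1) * Ttilde k x y a b (1 / y)"
  proof -
    have "?T j * (x * run_weight k y b (int j) (int k)) = b * x * y ^ (k - 1) * (?T j * (1 / y) ^ j)"
      if "j \<in> {1..<k}" for j
    proof -
      have "y ^ (k - 1) = y ^ (k - j - 1) * y ^ j" using that by (simp add: power_add[symmetric])
      moreover have "nat \<bar>int k - int j\<bar> = k - j" using that by auto
      ultimately show ?thesis using that assms(3) by (simp add: run_weight_def boundary_def power_one_over field_simps)
    qed
    then have "(\<Sum>j\<in>{1..<k}. ?T j * (x * run_weight k y b (int j) (int k)))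
             = (\<Sum>j\<in>{1..<k}. b * x * y ^ (k - 1) * (?T j * (1 / y) ^ j))"
      by (rule sum.cong[OF refl])
    then show ?thesis by (simp only: Ttilde_def sum_distrib_left)
  qed
  then show ?thesis
    using Tcoef_recursion[OF assms(2), of k] assms(1)
    by (simp add: sum_atLeastAtMost_split_ends boundary_def run_weight_def algebra_simps)
qed

theorem lemma2p3:
  fixes k :: nat and x y a b s :: complex
  assumes "k \<ge> 1"
    and "weight k x y a b summable_on walks k"
    and "y \<noteq> 0" and "s \<noteq> 0" and "1 - y * s \<noteq> 0" and "1 - y * (1 / s) \<noteq> 0"
  shows "((1 - x / (1 - y * s) - x * y * (1 / s) / (1 - y * (1 / s))) * Ttilde k x y a b s
           = (y * s - (y * s) ^ k) / (1 - y * s)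
             - x * (y * s) ^ k / (1 - y * s) * Ttilde k x y a b (1 / y)
             - x / (1 - y * (1 / s)) * Ttilde k x y a b y
             + a * Tcoef k x y a b 0 * (y * s - (y * s) ^ k) / (1 - y * s)
             + a * Tcoef k x y a b k * (y * s ^ (k - 1) - y ^ k) / (1 - y * (1 / s))) \<and>
         (Tcoef k x y a b 0 = 1 + b * x * (1 / y) * Ttilde k x y a b y + a * Tcoef k x y a b 0
           + a * b * y ^ (k - 1) * Tcoef k x y a b k) \<and>
         (Tcoef k x y a b k = b * y ^ (k - 1) + b * x * y ^ (k - 1) * Ttilde k x y a b (1 / y)
           + a * b * y ^ (k - 1) * Tcoef k x y a b 0 + a * Tcoef k x y a b k)"
proof -
  let ?Tt = "Ttilde k x y a b"
  have bottom: "run_gf k y b 0 s = (y * s - (y * s) ^ k) / (1 - y * s)"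
    using run_gf_bottom[OF assms(1), of y s b] assms(5) by (metis nonzero_mult_div_cancel_left)
  have top: "run_gf k y b k s = (y * s ^ (k - 1) - y ^ k) / (1 - y * (1 / s))"
    using run_gf_top[OF assms(1,4), of y b] assms(6) by (metis nonzero_mult_div_cancel_left)
  have "?Tt s = (1 + a * Tcoef k x y a b 0) * ((y * s - (y * s) ^ k) / (1 - y * s))
      + a * Tcoef k x y a b k * ((y * s ^ (k - 1) - y ^ k) / (1 - y * (1 / s)))
      + x * ((?Tt s - (y * s) ^ k * ?Tt (1 / y)) / (1 - y * s)
             + (y * (1 / s) * ?Tt s - ?Tt y) / (1 - y * (1 / s)))"
    using Ttilde_eq_run_gf[OF assms(1,2), of s]
    unfolding bottom top sum_Tcoef_run_gf_interior[OF assms(3-6)] .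
  then show ?thesis
    using linear_equation_collect Tcoef_bottom_eq[OF assms(1-3)] Tcoef_top_eq[OF assms(1-3)] by blast
qed

end
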